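(* Let $p$ be a prime and let $e\geq 2$ and $d\geq 2$ be integers. Let $\mathcal P(p^e,d)\subset\mathbb R^d$ be the convex hull of all $d$-dimensional vector-factorisations of $p^e$. Then $\mathcal P(p^e,d)$ is the set of $(x_1,\dots,x_d)\in\mathbb R^d$ satisfying the inequalities $$\sum_{i=1}^dx_i\leq (d-1)+p^e,$$ $$x_i\geq 1,\quad i=1,\dots,d,$$ $$\sum_{i=1}^d p^{\alpha_i}x_i\geq\lambda p^{\mu(\alpha)+1}+(d-\lambda)p^{\mu(\alpha)}\quad\text{for all }\alpha=(\alpha_1,\dots,\alpha_d)\in\mathcal R_\lambda(d,e),$$ for all $\lambda\in\{1,\dots,\min(e,d-1)\}$. This list of inequalities is minimal (no inequality can be removed) if $d\geq 3$. For $d=2$, the minimal list is obtained by removing the two inequalities $x_1\geq 1$ and $x_2\geq 1$.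
   Context: $\mathbb N=\{0,1,2,\dots\}$. A $d$-dimensional vector-factorisation of an integer $N\geq1$ is an integral vector $(v_1,\dots,v_d)\in\mathbb N^d$ with $v_1v_2\cdots v_d=N$. For $\lambda\in\{1,\dots,\min(e,d-1)\}$, $\mathcal R_\lambda(d,e)$ (regular vectors of type $\lambda$) is the set of all $\alpha=(\alpha_1,\dots,\alpha_d)\in\mathbb N^d$ such that $\min(\alpha_1,\dots,\alpha_d)=0$, $\max(\alpha_1,\dots,\alpha_d)\, d<e+\sum_{i=1}^d\alpha_i$, and $e+\sum_{i=1}^d\alpha_i\equiv\lambda\pmod d$. For $\alpha\in\mathcal R_\lambda(d,e)$, $\mu(\alpha)$ is the natural integer defined by $\mu(\alpha)d+\lambda=e+\sum_{i=1}^d\alpha_i$, i.e. $\mu(\alpha)=\lfloor (e+\sum_i\alpha_i)/d\rfloor$. *)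

theory Defs
  imports "HOL-Analysis.Analysis"
begin

text \<open>Dimension d is CARD('n); points of R^d are of type real^'n,
  integral vectors alpha in N^d are functions 'n => nat.\<close>

definition vector_factorisations :: "nat \<Rightarrow> (real^'n) set" where
  "vector_factorisations N =
     {x. \<exists>v::'n \<Rightarrow> nat. (\<forall>i. x $ i = real (v i)) \<and> (\<Prod>i\<in>UNIV. v i) = N}"

definition regular_vectors :: "nat \<Rightarrow> nat \<Rightarrow> ('n::finite \<Rightarrow> nat) set" where
  "regular_vectors lam e =
     {\<alpha>. Min (range \<alpha>) = 0
        \<and> Max (range \<alpha>) * CARD('n) < e + (\<Sum>i\<in>UNIV. \<alpha> i)
        \<and> (e + (\<Sum>i\<in>UNIV. \<alpha> i)) mod CARD('n) = lam mod CARD('n)}"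

definition mu :: "nat \<Rightarrow> ('n::finite \<Rightarrow> nat) \<Rightarrow> nat" where
  "mu e \<alpha> = (e + (\<Sum>i\<in>UNIV. \<alpha> i)) div CARD('n)"

datatype 'n ineq = SumIneq | LowIneq 'n | RegIneq nat "'n \<Rightarrow> nat"

fun holds :: "nat \<Rightarrow> nat \<Rightarrow> ('n::finite) ineq \<Rightarrow> real^'n \<Rightarrow> bool" where
  "holds p e SumIneq x =
     ((\<Sum>i\<in>UNIV. x $ i) \<le> real (CARD('n) - 1) + real p ^ e)"
| "holds p e (LowIneq i) x = (x $ i \<ge> 1)"
| "holds p e (RegIneq lam \<alpha>) x =
     ((\<Sum>i\<in>UNIV. real p ^ \<alpha> i * x $ i) \<ge>
        real lam * real p ^ (mu e \<alpha> + 1) + real (CARD('n) - lam) * real p ^ (mu e \<alpha>))"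

definition ineq_list :: "nat \<Rightarrow> ('n::finite) ineq set" where
  "ineq_list e = {SumIneq} \<union> range LowIneq \<union>
     {RegIneq lam \<alpha> | lam \<alpha>. lam \<in> {1..min e (CARD('n) - 1)} \<and> \<alpha> \<in> regular_vectors lam e}"

definition polyh :: "nat \<Rightarrow> nat \<Rightarrow> ('n::finite) ineq set \<Rightarrow> (real^'n) set" where
  "polyh p e J = {x. \<forall>j\<in>J. holds p e j x}"

end

theory Submission
  imports Defs "HOL-Computational_Algebra.Primes"
begin

text \<open>The vertices are the vectors \<open>(p ^ \<beta>\<^sub>1, \<dots>, p ^ \<beta>\<^sub>d)\<close> with
  \<open>\<Sum> \<beta>\<^sub>i = e\<close>. The sum bound holds there because \<open>p ^ a + p ^ b \<le> 1 + p ^ (a + b)\<close>,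
  and a regular inequality because \<open>p ^ g\<close> lies above the secant of \<open>g \<mapsto> p ^ g\<close>
  through \<open>\<mu>\<close> and \<open>\<mu> + 1\<close>; it is tight exactly when all \<open>\<alpha>\<^sub>i + \<beta>\<^sub>i \<in> {\<mu>, \<mu> + 1}\<close>.

  Conversely, a point \<open>x\<close> of the polytope outside the hull is separated from it by a linear
  form \<open>c\<close>. If some \<open>c\<^sub>k \<le> 0\<close>, the vertex \<open>p ^ e\<close> at coordinate \<open>k\<close> is at most
  \<open>c \<bullet> x\<close>. Otherwise let \<open>\<beta>\<close> minimise \<open>c\<close> over the vertices: moving a factor \<open>p\<close>
  between coordinates does not help, so \<open>u\<^sub>j \<le> p u\<^sub>i\<close> for \<open>u\<^sub>i = c\<^sub>i p ^ \<beta>\<^sub>i\<close> and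
  \<open>\<beta>\<^sub>j \<ge> 1\<close>. This makes \<open>u\<close> a nonnegative combination (a layer cake) of the rescaled regular
  inequalities tight at \<open>\<beta>\<close> plus lower bounds, whence \<open>c \<bullet> p ^ \<beta> \<le> c \<bullet> x\<close>.

  For irredundancy, each inequality is violated by a small perturbation of the centroid of
  vertices on which it is tight. Every other inequality is not tight at one of these vertices,
  and since its values at vertices are integers, it keeps a slack at the centroid that survives
  the perturbation. For \<open>d = 2\<close> the bound \<open>x\<^sub>k \<ge> 1\<close> is the difference of the sum bound
  and the regular inequality for \<open>\<alpha> = (e - 1) \<cdot> \<delta>\<^sub>k\<close>.\<close>

definition power_vector :: "nat \<Rightarrow> ('n::finite \<Rightarrow> nat) \<Rightarrow> real^'n" where
  "power_vector p \<beta> = (\<chi> i. real p ^ \<beta> i)"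

definition weak_compositions :: "nat \<Rightarrow> ('n::finite \<Rightarrow> nat) set" where
  "weak_compositions e = {\<beta>. (\<Sum>i\<in>UNIV. \<beta> i) = e}"

definition concentrated :: "nat \<Rightarrow> 'n \<Rightarrow> 'n \<Rightarrow> nat" where
  "concentrated e k = (\<lambda>i. if i = k then e else 0)"

lemma power_vector_nth [simp]: "power_vector p \<beta> $ i = real p ^ \<beta> i"
  by (simp add: power_vector_def)

lemma concentrated_in_weak_compositions: "concentrated e k \<in> weak_compositions e"
  by (simp add: weak_compositions_def concentrated_def)

lemma finite_weak_compositions: "finite (weak_compositions e :: ('n::finite \<Rightarrow> nat) set)"
proof (rule finite_subset)
  show "weak_compositions e \<subseteq> (Pi\<^sub>E (UNIV::'n set) (\<lambda>_. {..e}))"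
    unfolding weak_compositions_def PiE_UNIV_domain by (auto intro!: member_le_sum simp: Pi_def)
qed (rule finite_PiE, auto)

lemma vector_factorisations_prime_power:
  assumes "prime p"
  shows "vector_factorisations (p ^ e) = (power_vector p ` weak_compositions e :: (real^'n::finite) set)"
proof (intro equalityI subsetI)
  fix x :: "real^'n" assume "x \<in> vector_factorisations (p ^ e)"
  then obtain v :: "'n \<Rightarrow> nat" where v: "\<And>i. x $ i = real (v i)" "(\<Prod>i\<in>UNIV. v i) = p ^ e"
    unfolding vector_factorisations_def by auto
  have "\<exists>k. v i = p ^ k" for i
    using divides_primepow_nat[OF assms] v(2) by (metis dvd_prodI finite UNIV_I)
  then obtain \<beta> where \<beta>: "\<And>i. v i = p ^ \<beta> i" by metis
  have "p ^ (\<Sum>i\<in>UNIV. \<beta> i) = p ^ e" using v(2) \<beta> by (simp add: power_sum)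
  then have "(\<Sum>i\<in>UNIV. \<beta> i) = e" using assms prime_gt_1_nat power_inject_exp by blast
  moreover have "x = power_vector p \<beta>" using v(1) \<beta> by (simp add: vec_eq_iff)
  ultimately show "x \<in> power_vector p ` weak_compositions e" unfolding weak_compositions_def by auto
next
  fix x :: "real^'n" assume "x \<in> power_vector p ` weak_compositions e"
  then obtain \<beta> where "(\<Sum>i\<in>UNIV. \<beta> i) = e" "x = power_vector p \<beta>"
    unfolding weak_compositions_def by auto
  then show "x \<in> vector_factorisations (p ^ e)"
    unfolding vector_factorisations_def by (auto intro!: exI[of _ "\<lambda>i. p ^ \<beta> i"] simp: power_sum)
qed

lemma sum_if_mem:
  fixes a b :: "'a::comm_ring_1" and T :: "'n::finite set"
  shows "(\<Sum>i\<in>UNIV. if i \<in> T then a else b) = of_nat (card T) * a + of_nat (CARD('n) - card T) * b"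
proof -
  have "card (- T) = CARD('n) - card T"
    by (metis Compl_eq_Diff_UNIV card_Diff_subset finite subset_UNIV)
  then show ?thesis by (simp add: sum.If_cases)
qed

lemma regular_vector_sum:
  fixes \<alpha> :: "'n::finite \<Rightarrow> nat"
  assumes "\<alpha> \<in> regular_vectors lam e" "lam \<in> {1..min e (CARD('n) - 1)}"
  shows "e + (\<Sum>i\<in>UNIV. \<alpha> i) = mu e \<alpha> * CARD('n) + lam"
proof -
  have "lam \<le> CARD('n) - 1" "0 < CARD('n)" using assms(2) by simp_all
  then have "lam < CARD('n)" by linarith
  then have "lam mod CARD('n) = lam" by simp
  then show ?thesis using assms(1) unfolding regular_vectors_def mu_def by (metis (mono_tags) mem_Collect_eq div_mult_mod_eq)
qed

lemma regular_vector_le_mu: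
  fixes \<alpha> :: "'n::finite \<Rightarrow> nat"
  assumes "\<alpha> \<in> regular_vectors lam e" "lam \<in> {1..min e (CARD('n) - 1)}"
  shows "\<alpha> i \<le> mu e \<alpha>"
proof -
  have "\<alpha> i * CARD('n) \<le> Max (range \<alpha>) * CARD('n)" by simp
  also have "\<dots> < (mu e \<alpha> + 1) * CARD('n)"
    using assms regular_vector_sum[OF assms] unfolding regular_vectors_def by auto
  finally show ?thesis by (simp only: mult_less_cancel2) simp
qed

lemma regular_vector_has_zero:
  assumes "\<alpha> \<in> regular_vectors lam e"
  obtains i where "\<alpha> i = 0"
proof -
  have "Min (range \<alpha>) \<in> range \<alpha>" by (rule Min_in) auto
  then obtain i where "Min (range \<alpha>) = \<alpha> i" by blast
  then show thesis using assms that unfolding regular_vectors_def by auto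
qed

lemma regular_vector_less:
  fixes \<alpha> :: "'n::finite \<Rightarrow> nat"
  assumes "\<alpha> \<in> regular_vectors lam e"
  shows "\<alpha> i < e"
proof -
  let ?M = "Max (range \<alpha>)"
  obtain j where "\<alpha> j = 0" using regular_vector_has_zero[OF assms] .
  then have "(\<Sum>i\<in>UNIV. \<alpha> i) = (\<Sum>i\<in>UNIV - {j}. \<alpha> i)" by (simp add: sum.remove[of UNIV j])
  also have "\<dots> \<le> (CARD('n) - 1) * ?M" using sum_bounded_above[of "UNIV - {j}" \<alpha> ?M] by simp
  finally have "?M * CARD('n) < e + (CARD('n) - 1) * ?M"
    using assms unfolding regular_vectors_def by auto
  moreover have "(CARD('n) - 1) * ?M = ?M * CARD('n) - ?M" by (metis diff_mult_distrib mult.commute mult_1)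
  moreover have "?M \<le> ?M * CARD('n)" using mult_le_mono2[of 1 "CARD('n)" ?M] by simp
  ultimately have "?M < e" by linarith
  moreover have "\<alpha> i \<le> ?M" by simp
  ultimately show ?thesis by linarith
qed

section \<open>The inequalities are valid on the convex hull\<close>

lemma power_add_le_one_plus_power: "(p::nat) \<ge> 1 \<Longrightarrow> p ^ a + p ^ b \<le> 1 + p ^ (a + b)"
proof -
  assume "p \<ge> 1"
  then obtain A B where "p ^ a = A + 1" "p ^ b = B + 1"
    by (metis add.commute le_add_diff_inverse one_le_power)
  then show ?thesis by (simp add: power_add algebra_simps)
qed

lemma sum_powers_le:
  assumes "finite A" "A \<noteq> {}" "(p::nat) \<ge> 1"
  shows "(\<Sum>i\<in>A. p ^ \<beta> i) \<le> (card A - 1) + p ^ (\<Sum>i\<in>A. \<beta> i)"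
  using assms(1,2)
proof (induction A rule: finite_ne_induct)
  case (insert x F)
  have "card F \<ge> 1" using insert by (simp add: Suc_leI card_gt_0_iff)
  then show ?case
    using insert power_add_le_one_plus_power[OF assms(3), of "\<beta> x" "\<Sum>i\<in>F. \<beta> i"] by simp
qed simp

lemma bernoulli_int:
  assumes "(p::int) \<ge> 2"
  shows "1 + int k * (p - 1) \<le> p ^ k" and "k \<ge> 2 \<Longrightarrow> 1 + int k * (p - 1) < p ^ k"
proof -
  have *: "1 + int k * (p - 1) \<le> p ^ k \<and> (k \<ge> 2 \<longrightarrow> 1 + int k * (p - 1) < p ^ k)"
  proof (induction k)
    case (Suc k)
    have step: "p ^ Suc k = p ^ k + (p - 1) * p ^ k" by (simp add: algebra_simps)
    have "(p - 1) * 1 \<le> (p - 1) * p ^ k" using assms by (intro mult_left_mono) auto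
    moreover have "(p - 1) * p \<le> (p - 1) * p ^ k" if "k \<ge> 1"
      using assms that by (intro mult_left_mono) (auto intro: order.trans[OF _ power_increasing[of 1]])
    moreover have "(p - 1) * 2 \<le> (p - 1) * p" using assms by (intro mult_left_mono) auto
    ultimately show ?case using Suc.IH assms step by (cases "k = 0") (auto simp: algebra_simps)
  qed simp
  then show "1 + int k * (p - 1) \<le> p ^ k" "k \<ge> 2 \<Longrightarrow> 1 + int k * (p - 1) < p ^ k" by auto
qed

text \<open>The left-hand side is the secant of the convex function \<open>g \<mapsto> p ^ g\<close> through
  \<open>m\<close> and \<open>m + 1\<close>.\<close>
lemma power_ge_secant:
  assumes p: "(p::int) \<ge> 2"
  shows "p ^ m * (1 + (int g - int m) * (p - 1)) \<le> p ^ g"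
    and "g \<noteq> m \<Longrightarrow> g \<noteq> m + 1 \<Longrightarrow> p ^ m * (1 + (int g - int m) * (p - 1)) < p ^ g"
proof -
  have pm: "p ^ m > 0" "p ^ g > 0" using p by simp_all
  have "p ^ m * (1 + (int g - int m) * (p - 1)) \<le> p ^ g \<and>
    (g \<noteq> m \<longrightarrow> g \<noteq> m + 1 \<longrightarrow> p ^ m * (1 + (int g - int m) * (p - 1)) < p ^ g)"
  proof (cases "m \<le> g")
    case True
    then obtain k where k: "g = m + k" using le_Suc_ex by blast
    then show ?thesis
      using bernoulli_int[OF p, of k] pm by (auto simp: power_add intro: mult_left_mono)
  next
    case False
    then have "(int m - int g) * (p - 1) \<ge> 1 * 1" using p by (intro mult_mono) auto
    then have "1 + (int g - int m) * (p - 1) \<le> 0" by (simp add: algebra_simps)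
    then have "p ^ m * (1 + (int g - int m) * (p - 1)) \<le> 0"
      using pm by (simp add: mult_nonneg_nonpos)
    then show ?thesis using pm by auto
  qed
  then show "p ^ m * (1 + (int g - int m) * (p - 1)) \<le> p ^ g"
    "g \<noteq> m \<Longrightarrow> g \<noteq> m + 1 \<Longrightarrow> p ^ m * (1 + (int g - int m) * (p - 1)) < p ^ g" by auto
qed

lemma sum_powers_ge_balanced:
  fixes \<gamma> :: "'n::finite \<Rightarrow> nat"
  assumes p: "(p::int) \<ge> 2" and sum: "(\<Sum>i\<in>UNIV. \<gamma> i) = m * CARD('n) + lam" and lam: "lam \<le> CARD('n)"
  shows "int lam * p ^ (m + 1) + int (CARD('n) - lam) * p ^ m \<le> (\<Sum>i\<in>UNIV. p ^ \<gamma> i)"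
    and "(\<Sum>i\<in>UNIV. p ^ \<gamma> i) = int lam * p ^ (m + 1) + int (CARD('n) - lam) * p ^ m
          \<Longrightarrow> \<gamma> i = m \<or> \<gamma> i = m + 1"
proof -
  define t where "t i = p ^ m * (1 + (int (\<gamma> i) - int m) * (p - 1))" for i
  have "(\<Sum>i\<in>UNIV. 1 + (int (\<gamma> i) - int m) * (p - 1))
      = int CARD('n) + (int (\<Sum>i\<in>UNIV. \<gamma> i) - int CARD('n) * int m) * (p - 1)"
    by (simp add: sum.distrib sum_subtractf of_nat_sum flip: sum_distrib_right)
  then have "(\<Sum>i\<in>UNIV. t i) = p ^ m * (int CARD('n) + (int (\<Sum>i\<in>UNIV. \<gamma> i) - int CARD('n) * int m) * (p - 1))"
    by (simp add: t_def flip: sum_distrib_left)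
  also have "\<dots> = int lam * p ^ (m + 1) + int (CARD('n) - lam) * p ^ m"
    using sum lam by (simp add: of_nat_diff algebra_simps)
  finally have sum_t: "(\<Sum>i\<in>UNIV. t i) = int lam * p ^ (m + 1) + int (CARD('n) - lam) * p ^ m" .
  have t_le: "t i \<le> p ^ \<gamma> i" for i unfolding t_def by (rule power_ge_secant(1)[OF p])
  then show "int lam * p ^ (m + 1) + int (CARD('n) - lam) * p ^ m \<le> (\<Sum>i\<in>UNIV. p ^ \<gamma> i)"
    unfolding sum_t[symmetric] by (intro sum_mono)
  assume "(\<Sum>i\<in>UNIV. p ^ \<gamma> i) = int lam * p ^ (m + 1) + int (CARD('n) - lam) * p ^ m"
  then have "(\<Sum>i\<in>UNIV. p ^ \<gamma> i - t i) = 0" by (simp add: sum_subtractf sum_t)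
  then have "p ^ \<gamma> i = t i" using t_le by (subst (asm) sum_nonneg_eq_0_iff) auto
  then show "\<gamma> i = m \<or> \<gamma> i = m + 1" using power_ge_secant(2)[OF p, of "\<gamma> i" m] unfolding t_def by fastforce
qed

lemma ineq_list_cases [consumes 1, case_names Sum Low Reg]:
  fixes j :: "'n::finite ineq"
  assumes "j \<in> ineq_list e"
  obtains "j = SumIneq" | i where "j = LowIneq i"
    | lam \<alpha> where "j = RegIneq lam \<alpha>" "lam \<in> {1..min e (CARD('n) - 1)}" "\<alpha> \<in> regular_vectors lam e"
  using assms unfolding ineq_list_def by auto

lemma ineq_list_simps [simp]:
  "SumIneq \<in> ineq_list e"
  "LowIneq i \<in> ineq_list e"
  "RegIneq lam \<alpha> \<in> (ineq_list e :: 'n::finite ineq set)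
     \<longleftrightarrow> lam \<in> {1..min e (CARD('n) - 1)} \<and> \<alpha> \<in> regular_vectors lam e"
  unfolding ineq_list_def by auto

lemma polyhD: "x \<in> polyh p e J \<Longrightarrow> j \<in> J \<Longrightarrow> holds p e j x"
  unfolding polyh_def by blast

lemma polyh_antimono: "J \<subseteq> K \<Longrightarrow> polyh p e K \<subseteq> polyh p e J"
  unfolding polyh_def by auto

lemma polyh_sum_le:
  "x \<in> polyh p e (ineq_list e :: 'n::finite ineq set) \<Longrightarrow> (\<Sum>i\<in>UNIV. x $ i) \<le> real CARD('n) - 1 + real p ^ e"
  using polyhD[of x p e _ SumIneq] by (simp add: Suc_leI of_nat_diff)

lemma polyh_ge_one: "x \<in> polyh p e (ineq_list e) \<Longrightarrow> 1 \<le> x $ i"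
  using polyhD[of x p e _ "LowIneq i"] by simp

lemma convex_holds: "convex {x. holds p e j x}"
proof (cases j)
  case SumIneq
  have "{x. holds p e j x} = {x. inner (\<chi> i. 1) x \<le> real (CARD('a) - 1) + real p ^ e}"
    using SumIneq by (simp add: inner_vec_def)
  then show ?thesis by (simp add: convex_halfspace_le)
next
  case (LowIneq i)
  then have "{x. holds p e j x} = {x. inner (axis i 1) x \<ge> 1}" by (simp add: inner_axis')
  then show ?thesis by (simp add: convex_halfspace_ge)
next
  case (RegIneq lam \<alpha>)
  then show ?thesis using convex_halfspace_ge[of _ "\<chi> i. real p ^ \<alpha> i"] by (simp add: inner_vec_def)
qed

lemma convex_polyh: "convex (polyh p e J)"
proof -
  have "polyh p e J = (\<Inter>j\<in>J. {x. holds p e j x})" unfolding polyh_def by auto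
  then show ?thesis by (simp add: convex_INT convex_holds)
qed

definition reg_value :: "nat \<Rightarrow> ('n::finite \<Rightarrow> nat) \<Rightarrow> ('n \<Rightarrow> nat) \<Rightarrow> int" where
  "reg_value p \<alpha> \<beta> = (\<Sum>i\<in>UNIV. int p ^ (\<alpha> i + \<beta> i))"

definition reg_bound :: "nat \<Rightarrow> nat \<Rightarrow> nat \<Rightarrow> ('n::finite \<Rightarrow> nat) \<Rightarrow> int" where
  "reg_bound p e lam \<alpha> = int lam * int p ^ (mu e \<alpha> + 1) + int (CARD('n) - lam) * int p ^ mu e \<alpha>"

lemma reg_value_real:
  "(\<Sum>i\<in>UNIV. real p ^ \<alpha> i * power_vector p \<beta> $ i) = real_of_int (reg_value p \<alpha> \<beta>)"
  by (simp add: reg_value_def power_add)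

lemma holds_RegIneq:
  "holds p e (RegIneq lam \<alpha>) x \<longleftrightarrow> real_of_int (reg_bound p e lam \<alpha>) \<le> (\<Sum>i\<in>UNIV. real p ^ \<alpha> i * x $ i)"
  by (simp add: reg_bound_def)

lemma reg_bound_le_reg_value:
  fixes \<alpha> \<beta> :: "'n::finite \<Rightarrow> nat"
  assumes p: "p \<ge> 2" and \<alpha>: "\<alpha> \<in> regular_vectors lam e" and lam: "lam \<in> {1..min e (CARD('n) - 1)}"
    and \<beta>: "\<beta> \<in> weak_compositions e"
  shows "reg_bound p e lam \<alpha> \<le> reg_value p \<alpha> \<beta>"
    and "reg_value p \<alpha> \<beta> = reg_bound p e lam \<alpha> \<Longrightarrow> \<alpha> i + \<beta> i = mu e \<alpha> \<or> \<alpha> i + \<beta> i = mu e \<alpha> + 1"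
proof -
  have sum: "(\<Sum>i\<in>UNIV. \<alpha> i + \<beta> i) = mu e \<alpha> * CARD('n) + lam"
    using regular_vector_sum[OF \<alpha> lam] \<beta> unfolding weak_compositions_def by (simp add: sum.distrib)
  have "lam \<le> CARD('n)" "int p \<ge> 2" using lam p by auto
  note balanced = sum_powers_ge_balanced[OF this(2) sum this(1)]
  show "reg_bound p e lam \<alpha> \<le> reg_value p \<alpha> \<beta>"
    using balanced(1) unfolding reg_bound_def reg_value_def by simp
  show "reg_value p \<alpha> \<beta> = reg_bound p e lam \<alpha> \<Longrightarrow> \<alpha> i + \<beta> i = mu e \<alpha> \<or> \<alpha> i + \<beta> i = mu e \<alpha> + 1"
    using balanced(2) unfolding reg_bound_def reg_value_def by simp
qed

lemma power_vector_in_polyh: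
  fixes \<beta> :: "'n::finite \<Rightarrow> nat"
  assumes p: "p \<ge> 2" and \<beta>: "\<beta> \<in> weak_compositions e"
  shows "power_vector p \<beta> \<in> polyh p e (ineq_list e)"
  unfolding polyh_def
proof (intro CollectI ballI)
  fix j :: "'n ineq" assume "j \<in> ineq_list e"
  then show "holds p e j (power_vector p \<beta>)"
  proof (cases rule: ineq_list_cases)
    case Sum
    have "(\<Sum>i\<in>UNIV. p ^ \<beta> i) \<le> (CARD('n) - 1) + p ^ e"
      using sum_powers_le[of "UNIV::'n set" p \<beta>] p \<beta> by (simp add: weak_compositions_def)
    then have "real (\<Sum>i\<in>UNIV. p ^ \<beta> i) \<le> real ((CARD('n) - 1) + p ^ e)"
      by (simp only: of_nat_le_iff)
    then have "(\<Sum>i\<in>UNIV. real p ^ \<beta> i) \<le> real (CARD('n) - 1) + real p ^ e"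
      by (simp only: of_nat_add of_nat_power of_nat_sum)
    then show ?thesis using Sum by simp
  next
    case (Reg lam \<alpha>)
    then show ?thesis
      using reg_bound_le_reg_value(1)[OF p Reg(3,2) \<beta>] unfolding Reg(1) holds_RegIneq reg_value_real by simp
  qed (use p in simp)
qed

lemma convex_hull_subset_polyh:
  assumes "p \<ge> 2"
  shows "convex hull (power_vector p ` weak_compositions e) \<subseteq> (polyh p e (ineq_list e) :: (real^'n::finite) set)"
  using power_vector_in_polyh[OF assms] by (intro hull_minimal convex_polyh) auto

section \<open>The polytope lies in the convex hull\<close>

lemma regular_vector_from_composition:
  fixes \<beta> :: "'n::finite \<Rightarrow> nat"
  assumes \<beta>: "\<beta> \<in> weak_compositions e" and T: "T \<subseteq> {i. 1 \<le> \<beta> i}" "T \<noteq> {}" "T \<noteq> UNIV"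
  obtains \<alpha> where "\<alpha> \<in> regular_vectors (card T) e" "card T \<in> {1..min e (CARD('n) - 1)}"
    and "\<And>i. \<alpha> i + \<beta> i = mu e \<alpha> + (if i \<in> T then 1 else 0)"
proof -
  define \<epsilon> where "\<epsilon> i = (if i \<in> T then 1 else 0 :: nat)" for i
  define m where "m = Max (range (\<lambda>i. \<beta> i - \<epsilon> i))"
  define \<alpha> where "\<alpha> i = m - (\<beta> i - \<epsilon> i)" for i
  have \<alpha>\<beta>: "\<alpha> i + \<beta> i = m + \<epsilon> i" for i
    using T(1) Max_ge[of "range (\<lambda>i. \<beta> i - \<epsilon> i)" "\<beta> i - \<epsilon> i"]
    unfolding \<alpha>_def m_def \<epsilon>_def by auto
  have "card T \<le> (\<Sum>i\<in>T. \<beta> i)" using T(1) sum_mono[of T "\<lambda>_. 1::nat" \<beta>] by auto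
  also have "\<dots> \<le> e" using \<beta> sum_mono2[of UNIV T \<beta>] unfolding weak_compositions_def by simp
  finally have "card T \<le> e" .
  moreover have "card T < CARD('n)" using T(3) by (simp add: psubset_card_mono psubsetI)
  ultimately have card_T: "card T \<in> {1..min e (CARD('n) - 1)}"
    using T(2) by (auto simp: Suc_le_eq card_gt_0_iff)
  have "e + (\<Sum>i\<in>UNIV. \<alpha> i) = (\<Sum>i\<in>UNIV. \<alpha> i + \<beta> i)"
    using \<beta> unfolding weak_compositions_def by (simp add: sum.distrib)
  also have "\<dots> = m * CARD('n) + card T"
    unfolding \<alpha>\<beta> by (simp add: sum.distrib \<epsilon>_def sum.If_cases)
  finally have sum_\<alpha>: "e + (\<Sum>i\<in>UNIV. \<alpha> i) = m * CARD('n) + card T" .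
  have mu: "mu e \<alpha> = m"
    using card_T unfolding mu_def sum_\<alpha> by auto
  have "m \<in> range (\<lambda>i. \<beta> i - \<epsilon> i)" unfolding m_def by (rule Max_in) auto
  then obtain j where "\<beta> j - \<epsilon> j = m" by auto
  then have "\<alpha> j = 0" unfolding \<alpha>_def by simp
  then have "Min (range \<alpha>) = 0" using Min_le[of "range \<alpha>" "\<alpha> j"] by simp
  moreover have "Max (range \<alpha>) * CARD('n) < e + (\<Sum>i\<in>UNIV. \<alpha> i)"
  proof -
    have "Max (range \<alpha>) \<le> m" unfolding \<alpha>_def by auto
    then have "Max (range \<alpha>) * CARD('n) \<le> m * CARD('n)" by (rule mult_le_mono1)
    moreover have "1 \<le> card T" using card_T by simp
    ultimately show ?thesis unfolding sum_\<alpha> by linarith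
  qed
  ultimately have "\<alpha> \<in> regular_vectors (card T) e" by (simp add: regular_vectors_def sum_\<alpha>)
  then show thesis by (rule that[OF _ card_T]) (simp add: \<alpha>\<beta> mu \<epsilon>_def)
qed

definition excess :: "nat \<Rightarrow> ('n::finite \<Rightarrow> nat) \<Rightarrow> real^'n \<Rightarrow> 'n \<Rightarrow> real" where
  "excess p \<beta> x i = x $ i / real p ^ \<beta> i - 1"

text \<open>The regular inequality for the \<open>\<alpha>\<close> with \<open>\<alpha> + \<beta> = \<mu> + [i \<in> T]\<close>,
  divided by \<open>p ^ \<mu>\<close>.\<close>
lemma excess_ineq_proper:
  fixes \<beta> :: "'n::finite \<Rightarrow> nat" and x :: "real^'n"
  assumes p: "p \<ge> 2" and \<beta>: "\<beta> \<in> weak_compositions e" and x: "x \<in> polyh p e (ineq_list e)"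
    and T: "T \<subseteq> {i. 1 \<le> \<beta> i}" "T \<noteq> {}" "T \<noteq> UNIV"
  shows "0 \<le> (\<Sum>i\<in>UNIV. (if i \<in> T then real p else 1) * excess p \<beta> x i)"
proof -
  obtain \<alpha> where \<alpha>: "\<alpha> \<in> regular_vectors (card T) e" "card T \<in> {1..min e (CARD('n) - 1)}"
    and \<alpha>\<beta>: "\<And>i. \<alpha> i + \<beta> i = mu e \<alpha> + (if i \<in> T then 1 else 0)"
    using regular_vector_from_composition[OF \<beta> T] by blast
  define r where "r i = (if i \<in> T then real p else 1)" for i
  have p0: "real p > 0" using p by simp
  have pow: "real p ^ \<alpha> i = real p ^ mu e \<alpha> * (r i / real p ^ \<beta> i)" for i
  proof -
    have "real p ^ \<alpha> i * real p ^ \<beta> i = real p ^ mu e \<alpha> * r i"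
      using \<alpha>\<beta>[of i] by (simp add: r_def flip: power_add)
    then show ?thesis using p0 by (simp add: field_simps)
  qed
  have "real p ^ mu e \<alpha> * (\<Sum>i\<in>UNIV. r i) = real_of_int (reg_bound p e (card T) \<alpha>)"
    by (simp add: r_def sum_if_mem reg_bound_def algebra_simps)
  also have "\<dots> \<le> (\<Sum>i\<in>UNIV. real p ^ \<alpha> i * x $ i)"
    using polyhD[OF x, of "RegIneq (card T) \<alpha>"] \<alpha> unfolding holds_RegIneq by simp
  also have "\<dots> = real p ^ mu e \<alpha> * (\<Sum>i\<in>UNIV. r i * x $ i / real p ^ \<beta> i)"
    by (simp add: pow sum_distrib_left mult_ac)
  finally have "(\<Sum>i\<in>UNIV. r i) \<le> (\<Sum>i\<in>UNIV. r i * x $ i / real p ^ \<beta> i)"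
    using p0 by (simp add: mult_le_cancel_left_pos)
  then show ?thesis by (simp add: excess_def r_def right_diff_distrib sum_subtractf)
qed

lemma excess_ineq:
  fixes \<beta> :: "'n::finite \<Rightarrow> nat" and x :: "real^'n"
  assumes p: "p \<ge> 2" and \<beta>: "\<beta> \<in> weak_compositions e" and x: "x \<in> polyh p e (ineq_list e)"
    and T: "T \<subseteq> {i. 1 \<le> \<beta> i}" "T \<noteq> {}" and d: "CARD('n) \<ge> 2"
  shows "0 \<le> (\<Sum>i\<in>UNIV. (if i \<in> T then real p else 1) * excess p \<beta> x i)"
proof (cases "T = UNIV")
  case True
  obtain k :: 'n where True by simp
  have k: "{k} \<noteq> UNIV" using d by (auto dest: arg_cong[of _ _ card])
  have "0 \<le> (\<Sum>i\<in>UNIV. (if i \<in> {k} then real p else 1) * excess p \<beta> x i)"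
    using T True k by (intro excess_ineq_proper[OF p \<beta> x]) auto
  moreover have "0 \<le> (\<Sum>i\<in>UNIV. (if i \<in> - {k} then real p else 1) * excess p \<beta> x i)"
    using T True k by (intro excess_ineq_proper[OF p \<beta> x]) auto
  moreover have "(\<Sum>i\<in>UNIV. (if i \<in> {k} then real p else 1) * excess p \<beta> x i)
      + (\<Sum>i\<in>UNIV. (if i \<in> - {k} then real p else 1) * excess p \<beta> x i)
      = (\<Sum>i\<in>UNIV. (real p + 1) * excess p \<beta> x i)"
    unfolding sum.distrib[symmetric] by (rule sum.cong) (auto simp: algebra_simps)
  ultimately have "0 \<le> (\<Sum>i\<in>UNIV. (real p + 1) * excess p \<beta> x i)" by linarith
  then have "0 \<le> (\<Sum>i\<in>UNIV. excess p \<beta> x i)"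
    by (simp add: zero_le_mult_iff flip: sum_distrib_left)
  then show ?thesis using True p by (simp flip: sum_distrib_left)
qed (use excess_ineq_proper[OF p \<beta> x T] in blast)

text \<open>Layer-cake decomposition: the weight \<open>\<Lambda> + (r - 1) w\<close> is a nonnegative combination
  of the weights \<open>if i \<in> T then r else 1\<close> of the nonempty level sets \<open>T\<close> of \<open>w\<close>.\<close>
lemma layer_cake_nonneg:
  fixes h w :: "'a::finite \<Rightarrow> real"
  assumes level: "\<And>T. T \<noteq> {} \<Longrightarrow> T \<subseteq> S \<Longrightarrow> 0 \<le> (\<Sum>i\<in>UNIV. (if i \<in> T then r else 1) * h i)"
    and "\<And>i. 0 \<le> w i" "\<And>i. w i \<le> \<Lambda>" "\<And>i. 0 < w i \<Longrightarrow> i \<in> S" and "w j = \<Lambda>"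
  shows "0 \<le> (\<Sum>i\<in>UNIV. (\<Lambda> + (r - 1) * w i) * h i)"
  using assms(2-)
proof (induction "card {i. 0 < w i}" arbitrary: w \<Lambda> j rule: less_induct)
  case less
  show ?case
  proof (cases "\<Lambda> = 0")
    case True
    then have "w i = 0" for i using less.prems(1,2)[of i] by linarith
    then show ?thesis using True by simp
  next
    case False
    define P where "P = {i. 0 < w i}"
    have "j \<in> P" using False less.prems(1)[of j] less.prems(4) unfolding P_def by auto
    define m where "m = Min (w ` P)"
    have "m \<in> w ` P" unfolding m_def using \<open>j \<in> P\<close> by (intro Min_in) auto
    then obtain i0 where i0: "i0 \<in> P" "w i0 = m" by blast
    have m_le: "m \<le> w i" if "i \<in> P" for i unfolding m_def using that by simp
    define w' where "w' i = (if i \<in> P then w i - m else 0)" for i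
    have "card {i. 0 < w' i} \<le> card (P - {i0})" unfolding w'_def using i0 by (intro card_mono) auto
    also have "\<dots> < card {i. 0 < w i}" using i0(1) unfolding P_def by (intro card_Diff1_less) auto
    finally have card_less: "card {i. 0 < w' i} < card {i. 0 < w i}" .
    have "m \<le> \<Lambda>" using m_le[OF \<open>j \<in> P\<close>] less.prems(4) by simp
    then have "0 \<le> w' i" "w' i \<le> \<Lambda> - m" "0 < w' i \<Longrightarrow> i \<in> S" for i
      using m_le[of i] less.prems(2,3)[of i] unfolding w'_def P_def by (auto split: if_splits)
    moreover have "w' j = \<Lambda> - m" using \<open>j \<in> P\<close> less.prems(4) unfolding w'_def by simp
    ultimately have IH: "0 \<le> (\<Sum>i\<in>UNIV. (\<Lambda> - m + (r - 1) * w' i) * h i)"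
      using less.hyps[OF card_less] by blast
    have "0 < m" using i0 unfolding P_def by simp
    moreover have "P \<subseteq> S" using less.prems(3) unfolding P_def by blast
    ultimately have level_P: "0 \<le> m * (\<Sum>i\<in>UNIV. (if i \<in> P then r else 1) * h i)"
      using level[of P] \<open>j \<in> P\<close> by (intro mult_nonneg_nonneg) auto
    have split: "\<Lambda> + (r - 1) * w i = m * (if i \<in> P then r else 1) + (\<Lambda> - m + (r - 1) * w' i)" for i
    proof (cases "i \<in> P")
      case False
      then have "w i = 0" using less.prems(1)[of i] unfolding P_def by simp
      then show ?thesis using False unfolding w'_def by simp
    qed (simp add: w'_def algebra_simps)
    have "(\<Sum>i\<in>UNIV. (\<Lambda> + (r - 1) * w i) * h i)
        = (\<Sum>i\<in>UNIV. m * ((if i \<in> P then r else 1) * h i) + (\<Lambda> - m + (r - 1) * w' i) * h i)"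
      by (simp only: split distrib_right mult.assoc)
    also have "\<dots> = m * (\<Sum>i\<in>UNIV. (if i \<in> P then r else 1) * h i) + (\<Sum>i\<in>UNIV. (\<Lambda> - m + (r - 1) * w' i) * h i)"
      by (simp only: sum.distrib sum_distrib_left)
    finally show ?thesis using IH level_P by linarith
  qed
qed

lemma vertex_below_objective_nonpos:
  fixes x :: "real^'n::finite" and c :: "'n \<Rightarrow> real"
  assumes x: "x \<in> polyh p e (ineq_list e)" and nonpos: "c k \<le> 0"
  shows "\<exists>\<beta>\<in>weak_compositions e. (\<Sum>i\<in>UNIV. c i * real p ^ \<beta> i) \<le> (\<Sum>i\<in>UNIV. c i * x $ i)"
proof -
  have "Min (range c) \<in> range c" by (rule Min_in) auto
  then obtain l where l: "c l = Min (range c)" by (metis rangeE)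
  have l_le: "c l \<le> c i" for i unfolding l by simp
  have "c l \<le> 0" using nonpos l_le[of k] by simp
  have "(\<Sum>i\<in>UNIV. c i * real p ^ concentrated e l i) = (\<Sum>i\<in>UNIV. c i) + c l * (real p ^ e - 1)"
    by (simp add: concentrated_def if_distrib sum.If_cases algebra_simps sum.remove[of UNIV l] Compl_eq_Diff_UNIV)
  also have "\<dots> \<le> (\<Sum>i\<in>UNIV. c i) + c l * ((\<Sum>i\<in>UNIV. x $ i) - real CARD('n))"
    using polyh_sum_le[OF x] \<open>c l \<le> 0\<close> by (intro add_left_mono mult_left_mono_neg) auto
  also have "\<dots> = (\<Sum>i\<in>UNIV. c i) + (\<Sum>i\<in>UNIV. c l * (x $ i - 1))"
    by (simp add: sum_distrib_left sum_subtractf right_diff_distrib)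
  also have "\<dots> \<le> (\<Sum>i\<in>UNIV. c i) + (\<Sum>i\<in>UNIV. c i * (x $ i - 1))"
    using polyh_ge_one[OF x] l_le by (intro add_left_mono sum_mono mult_right_mono) auto
  also have "\<dots> = (\<Sum>i\<in>UNIV. c i * x $ i)"
    by (simp add: right_diff_distrib sum_subtractf)
  finally show ?thesis using concentrated_in_weak_compositions by blast
qed

lemma optimal_composition_exchange:
  fixes \<beta> :: "'n::finite \<Rightarrow> nat" and c :: "'n \<Rightarrow> real"
  assumes p: "p \<ge> 2" and \<beta>: "\<beta> \<in> weak_compositions e" and pos: "\<And>i. 0 < c i"
    and opt: "\<And>\<beta>'. \<beta>' \<in> weak_compositions e \<Longrightarrow>
                (\<Sum>i\<in>UNIV. c i * real p ^ \<beta> i) \<le> (\<Sum>i\<in>UNIV. c i * real p ^ \<beta>' i)"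
    and j: "1 \<le> \<beta> j"
  shows "c j * real p ^ \<beta> j \<le> real p * (c i * real p ^ \<beta> i)"
proof (cases "i = j")
  case True
  have "0 \<le> c j * real p ^ \<beta> j" using pos[of j] by simp
  then show ?thesis using True p by (simp add: mult_le_cancel_right1)
next
  case False
  text \<open>Move one factor \<open>p\<close> from coordinate \<open>j\<close> to coordinate \<open>i\<close>.\<close>
  define \<beta>' where "\<beta>' = \<beta>(j := \<beta> j - 1, i := \<beta> i + 1)"
  have "(\<Sum>l\<in>UNIV. \<beta>' l) + 1 = (\<Sum>l\<in>UNIV. \<beta> l) + 1"
    using False j unfolding \<beta>'_def by (simp add: sum.remove[of UNIV j] sum.remove[of "UNIV - {j}" i])
  then have "\<beta>' \<in> weak_compositions e" using \<beta> unfolding weak_compositions_def by simp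
  define q where "q = real p ^ (\<beta> j - 1)"
  have pj: "real p ^ \<beta> j = real p * q" unfolding q_def using j by (simp flip: power_Suc)
  have "(\<Sum>l\<in>UNIV. c l * real p ^ \<beta>' l) = (\<Sum>l\<in>UNIV. c l * real p ^ \<beta> l)
     + (real p - 1) * (c i * real p ^ \<beta> i - c j * q)"
    using False pj unfolding \<beta>'_def
    by (simp add: sum.remove[of UNIV j] sum.remove[of "UNIV - {j}" i] q_def algebra_simps)
  then have "c j * q \<le> c i * real p ^ \<beta> i"
    using opt[OF \<open>\<beta>' \<in> weak_compositions e\<close>] p by (simp add: zero_le_mult_iff)
  then show ?thesis using p pj by (simp add: mult_left_mono)
qed

text \<open>For a vertex \<open>\<beta>\<close> that cannot be improved by an exchange, the weights
  \<open>u\<close> are a nonnegative combination of the weights of the inequalities \<open>excess_ineq\<close>.\<close>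
lemma weighted_excess_nonneg:
  fixes \<beta> :: "'n::finite \<Rightarrow> nat" and x :: "real^'n" and u :: "'n \<Rightarrow> real"
  assumes p: "p \<ge> 2" and e: "e \<ge> 1" and d: "CARD('n) \<ge> 2"
    and \<beta>: "\<beta> \<in> weak_compositions e" and x: "x \<in> polyh p e (ineq_list e)"
    and pos: "\<And>i. 0 < u i" and exchange: "\<And>i j. 1 \<le> \<beta> j \<Longrightarrow> u j \<le> real p * u i"
  shows "0 \<le> (\<Sum>i\<in>UNIV. u i * excess p \<beta> x i)"
proof -
  define S where "S = {i. 1 \<le> \<beta> i}"
  have "S \<noteq> {}"
  proof
    assume "S = {}"
    then have "\<beta> i = 0" for i unfolding S_def by (auto simp: Suc_le_eq)
    then show False using \<beta> e unfolding weak_compositions_def by simp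
  qed
  then have "Max (u ` S) \<in> u ` S" by (intro Max_in) auto
  then obtain j where j: "j \<in> S" "u j = Max (u ` S)" by auto
  define \<Lambda> where "\<Lambda> = u j / real p"
  have p1: "real p > 1" using p by simp
  have \<Lambda>_le: "\<Lambda> \<le> u i" for i
    using exchange[of j i] j(1) p1 unfolding \<Lambda>_def S_def by (simp add: divide_le_eq mult.commute)
  have le_\<Lambda>: "u i \<le> real p * \<Lambda>" if "i \<in> S" for i
    using that j p1 unfolding \<Lambda>_def by simp
  have "0 < \<Lambda>" using pos[of j] p1 unfolding \<Lambda>_def by simp
  define w where "w i = (if i \<in> S then (u i - \<Lambda>) / (real p - 1) else 0)" for i
  have "0 \<le> w i" "w i \<le> \<Lambda>" "0 < w i \<Longrightarrow> i \<in> S" for i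
    using \<Lambda>_le[of i] le_\<Lambda>[of i] p1 \<open>0 < \<Lambda>\<close> unfolding w_def
    by (auto simp: divide_le_eq algebra_simps split: if_splits)
  moreover have "w j = \<Lambda>" using j(1) p1 unfolding w_def \<Lambda>_def by (simp add: field_simps)
  ultimately have layers: "0 \<le> (\<Sum>i\<in>UNIV. (\<Lambda> + (real p - 1) * w i) * excess p \<beta> x i)"
    using excess_ineq[OF p \<beta> x _ _ d] unfolding S_def by (intro layer_cake_nonneg) auto
  have rest: "0 \<le> (if i \<in> S then 0 else (u i - \<Lambda>) * excess p \<beta> x i)" for i
    using \<Lambda>_le[of i] polyh_ge_one[OF x, of i] unfolding S_def excess_def by (auto simp: Suc_le_eq)
  have "u i * excess p \<beta> x i = (\<Lambda> + (real p - 1) * w i) * excess p \<beta> x i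
      + (if i \<in> S then 0 else (u i - \<Lambda>) * excess p \<beta> x i)" for i
  proof -
    have "\<Lambda> + (real p - 1) * w i = (if i \<in> S then u i else \<Lambda>)" using p1 unfolding w_def by auto
    then show ?thesis by (auto simp: algebra_simps)
  qed
  then have "(\<Sum>i\<in>UNIV. u i * excess p \<beta> x i) = (\<Sum>i\<in>UNIV. (\<Lambda> + (real p - 1) * w i) * excess p \<beta> x i)
      + (\<Sum>i\<in>UNIV. if i \<in> S then 0 else (u i - \<Lambda>) * excess p \<beta> x i)"
    by (simp only: sum.distrib)
  moreover have "0 \<le> (\<Sum>i\<in>UNIV. if i \<in> S then 0 else (u i - \<Lambda>) * excess p \<beta> x i)"
    using rest by (rule sum_nonneg)
  ultimately show ?thesis using layers by linarith
qed

lemma vertex_below_objective_pos: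
  fixes x :: "real^'n::finite" and c :: "'n \<Rightarrow> real"
  assumes p: "p \<ge> 2" and e: "e \<ge> 1" and d: "CARD('n) \<ge> 2"
    and x: "x \<in> polyh p e (ineq_list e)" and pos: "\<And>i. 0 < c i"
  shows "\<exists>\<beta>\<in>weak_compositions e. (\<Sum>i\<in>UNIV. c i * real p ^ \<beta> i) \<le> (\<Sum>i\<in>UNIV. c i * x $ i)"
proof -
  define f where "f \<beta> = (\<Sum>i\<in>UNIV. c i * real p ^ \<beta> i)" for \<beta> :: "'n \<Rightarrow> nat"
  define \<beta> where "\<beta> = arg_min_on f (weak_compositions e)"
  obtain k :: 'n where True by simp
  have ne: "weak_compositions e \<noteq> ({} :: ('n \<Rightarrow> nat) set)"
    using concentrated_in_weak_compositions[of e k] by auto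
  have \<beta>: "\<beta> \<in> weak_compositions e" and opt: "\<And>\<beta>'. \<beta>' \<in> weak_compositions e \<Longrightarrow> f \<beta> \<le> f \<beta>'"
    using arg_min_if_finite[OF finite_weak_compositions ne, of f] unfolding \<beta>_def by (auto simp: not_less)
  define u where "u i = c i * real p ^ \<beta> i" for i
  have "0 \<le> (\<Sum>i\<in>UNIV. u i * excess p \<beta> x i)"
  proof (rule weighted_excess_nonneg[OF p e d \<beta> x])
    show "0 < u i" for i unfolding u_def using pos p by simp
    show "u j \<le> real p * u i" if "1 \<le> \<beta> j" for i j
      unfolding u_def by (rule optimal_composition_exchange[OF p \<beta> pos opt[unfolded f_def] that])
  qed
  also have "(\<Sum>i\<in>UNIV. u i * excess p \<beta> x i) = (\<Sum>i\<in>UNIV. c i * x $ i) - f \<beta>"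
    using p by (simp add: u_def excess_def f_def algebra_simps sum_subtractf)
  finally show ?thesis using \<beta> unfolding f_def by auto
qed

theorem polyh_subset_convex_hull:
  assumes p: "p \<ge> 2" and e: "e \<ge> 1" and d: "CARD('n::finite) \<ge> 2"
  shows "polyh p e (ineq_list e) \<subseteq> convex hull (power_vector p ` weak_compositions e :: (real^'n) set)"
proof
  fix x :: "real^'n" assume x: "x \<in> polyh p e (ineq_list e)"
  let ?H = "convex hull (power_vector p ` weak_compositions e :: (real^'n) set)"
  show "x \<in> ?H"
  proof (rule ccontr)
    assume "x \<notin> ?H"
    moreover have "closed ?H"
      by (intro compact_imp_closed finite_imp_compact_convex_hull finite_imageI finite_weak_compositions)
    ultimately obtain a b where ab: "inner a x < b" "\<And>y. y \<in> ?H \<Longrightarrow> b < inner a y"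
      using separating_hyperplane_closed_point[OF convex_convex_hull] by blast
    obtain \<beta> where \<beta>: "\<beta> \<in> weak_compositions e"
      and below: "(\<Sum>i\<in>UNIV. a $ i * real p ^ \<beta> i) \<le> (\<Sum>i\<in>UNIV. a $ i * x $ i)"
    proof (cases "\<exists>k. a $ k \<le> 0")
      case True
      then obtain k where "a $ k \<le> 0" by blast
      then show ?thesis using vertex_below_objective_nonpos[OF x] that by blast
    next
      case False
      then have "0 < a $ i" for i by (simp add: not_le)
      then show ?thesis using vertex_below_objective_pos[OF p e d x] that by blast
    qed
    have "b < inner a (power_vector p \<beta>)" using \<beta> by (intro ab(2) hull_inc) auto
    then show False using ab(1) below by (simp add: inner_vec_def)
  qed
qed

section \<open>Irredundancy\<close>

definition centroid :: "nat \<Rightarrow> ('t \<Rightarrow> 'n::finite \<Rightarrow> nat) \<Rightarrow> 't set \<Rightarrow> real^'n" where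
  "centroid p f A = (\<Sum>t\<in>A. (1 / real (card A)) *\<^sub>R power_vector p (f t))"

lemma centroid_in_polyh:
  assumes p: "p \<ge> 2" and A: "finite A" "A \<noteq> {}" and f: "f ` A \<subseteq> weak_compositions e"
  shows "centroid p f A \<in> polyh p e (ineq_list e)"
proof -
  have "centroid p f A \<in> convex hull (power_vector p ` weak_compositions e)"
    unfolding centroid_def
  proof (rule convex_sum[OF A(1) convex_convex_hull])
    show "(\<Sum>t\<in>A. 1 / real (card A)) = 1" using A by simp
  qed (use f in \<open>auto intro: hull_inc\<close>)
  then show ?thesis using convex_hull_subset_polyh[OF p] by blast
qed

lemma centroid_linear:
  "(\<Sum>i\<in>UNIV. a i * centroid p f A $ i) = (\<Sum>t\<in>A. \<Sum>i\<in>UNIV. a i * real p ^ f t i) / real (card A)"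
  by (simp add: centroid_def sum_component sum_distrib_left sum_divide_distrib sum.swap[of _ A] mult_ac)

lemma centroid_reg_value:
  "(\<Sum>i\<in>UNIV. real p ^ \<alpha> i * centroid p f A $ i) = (\<Sum>t\<in>A. real_of_int (reg_value p \<alpha> (f t))) / real (card A)"
  by (simp add: centroid_linear reg_value_def power_add)

text \<open>The values of a regular inequality at vertices are integers, so a vertex where it is
  not tight contributes a slack of at least \<open>1\<close>.\<close>
lemma centroid_reg_slack:
  fixes \<alpha> :: "'n::finite \<Rightarrow> nat"
  assumes p: "p \<ge> 2" and A: "finite A" and f: "f ` A \<subseteq> weak_compositions e"
    and \<alpha>: "\<alpha> \<in> regular_vectors lam e" "lam \<in> {1..min e (CARD('n) - 1)}"
    and t0: "t0 \<in> A" "reg_value p \<alpha> (f t0) \<noteq> reg_bound p e lam \<alpha>"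
  shows "real_of_int (reg_bound p e lam \<alpha>) + 1 / real (card A) \<le> (\<Sum>i\<in>UNIV. real p ^ \<alpha> i * centroid p f A $ i)"
proof -
  let ?R = "reg_bound p e lam \<alpha>"
  have ge: "?R \<le> reg_value p \<alpha> (f t)" if "t \<in> A" for t
    using reg_bound_le_reg_value(1)[OF p \<alpha>] f that by blast
  have "?R + 1 \<le> reg_value p \<alpha> (f t0)" using ge[OF t0(1)] t0(2) by simp
  moreover have "(\<Sum>t\<in>A - {t0}. ?R) \<le> (\<Sum>t\<in>A - {t0}. reg_value p \<alpha> (f t))"
    using ge by (intro sum_mono) auto
  ultimately have "(\<Sum>t\<in>A. ?R) + 1 \<le> (\<Sum>t\<in>A. reg_value p \<alpha> (f t))"
    using sum.remove[OF A t0(1), of "\<lambda>_. ?R"] sum.remove[OF A t0(1), of "\<lambda>t. reg_value p \<alpha> (f t)"]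
    by linarith
  then have "real_of_int ((\<Sum>t\<in>A. ?R) + 1) \<le> real_of_int (\<Sum>t\<in>A. reg_value p \<alpha> (f t))"
    by (simp only: of_int_le_iff)
  then have "real (card A) * real_of_int ?R + 1 \<le> (\<Sum>t\<in>A. real_of_int (reg_value p \<alpha> (f t)))"
    by simp
  then have "(real (card A) * real_of_int ?R + 1) / real (card A)
      \<le> (\<Sum>t\<in>A. real_of_int (reg_value p \<alpha> (f t))) / real (card A)"
    by (rule divide_right_mono) simp
  moreover have "card A \<noteq> 0" using A t0(1) by auto
  ultimately show ?thesis by (simp add: centroid_reg_value add_divide_distrib)
qed

lemma polyh_psubset_remove:
  assumes "j \<in> J" "y \<in> polyh p e (J - {j})" "\<not> holds p e j y"
  shows "polyh p e J \<subset> polyh p e (J - {j})"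
  using assms polyh_antimono[of "J - {j}" J p e] unfolding polyh_def by blast

lemma SumIneq_irredundant:
  assumes p: "p \<ge> 2" and e: "e \<ge> 1" and d: "CARD('n::finite) \<ge> 2"
  shows "polyh p e (ineq_list e) \<subset> polyh p e (ineq_list e - {SumIneq} :: 'n ineq set)"
proof (rule polyh_psubset_remove)
  let ?y = "(\<chi> i. real p ^ e) :: real^'n"
  obtain k :: 'n where True by simp
  show "?y \<in> polyh p e (ineq_list e - {SumIneq})"
    unfolding polyh_def
  proof (intro CollectI ballI)
    fix j :: "'n ineq" assume "j \<in> ineq_list e - {SumIneq}"
    then have "j \<in> ineq_list e" "j \<noteq> SumIneq" by auto
    then show "holds p e j ?y"
    proof (cases rule: ineq_list_cases)
      case (Reg lam \<alpha>)
      have "holds p e j (power_vector p (concentrated e k))"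
        using power_vector_in_polyh[OF p concentrated_in_weak_compositions] \<open>j \<in> ineq_list e\<close> polyhD by blast
      moreover have "(\<Sum>i\<in>UNIV. real p ^ \<alpha> i * power_vector p (concentrated e k) $ i) \<le> (\<Sum>i\<in>UNIV. real p ^ \<alpha> i * ?y $ i)"
        using p by (intro sum_mono mult_left_mono) (auto simp: concentrated_def intro: power_increasing)
      ultimately show ?thesis unfolding Reg(1) holds_RegIneq by linarith
    qed (use p in auto)
  qed
  have "real p \<le> real p ^ e" using p e power_increasing[of 1 e "real p"] by simp
  then have "2 \<le> real p ^ e" using p by linarith
  then have "0 < (real CARD('n) - 1) * (real p ^ e - 1)" using d by (intro mult_pos_pos) auto
  then have "real CARD('n) - 1 + real p ^ e < real CARD('n) * real p ^ e" by (simp add: algebra_simps)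
  then show "\<not> holds p e SumIneq ?y" using d by (simp add: of_nat_diff)
qed simp

lemma concentrated_regular_vector_dim2:
  assumes d: "CARD('n::finite) = 2" and e: "e \<ge> 2"
  shows "concentrated (e - 1) (k::'n) \<in> regular_vectors 1 e" and "mu e (concentrated (e - 1) k) = e - 1"
proof -
  define \<alpha> where "\<alpha> = concentrated (e - 1) k"
  have "card (UNIV - {k}) = 1" using d by simp
  then obtain b where "UNIV - {k} = {b}" by (rule card_1_singletonE)
  then have "b \<noteq> k" "(UNIV :: 'n set) = {k, b}" by auto
  then have range: "range \<alpha> = {e - 1, 0}" unfolding \<alpha>_def concentrated_def by auto
  have sum: "e + (\<Sum>i\<in>UNIV. \<alpha> i) = (e - 1) * 2 + 1"
    using e by (simp add: \<alpha>_def concentrated_def)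
  have "((e - 1) * 2 + 1) mod 2 = (1::nat)" by presburger
  then show "\<alpha> \<in> regular_vectors 1 e" using e unfolding regular_vectors_def mem_Collect_eq range sum d by simp
  show "mu e \<alpha> = e - 1" unfolding mu_def sum d by simp
qed

lemma LowIneq_redundant_dim2:
  assumes p: "p \<ge> 2" and e: "e \<ge> 2" and d: "CARD('n::finite) = 2"
  shows "polyh p e (ineq_list e - range LowIneq) = polyh p e (ineq_list e :: 'n ineq set)"
proof
  show "polyh p e (ineq_list e) \<subseteq> polyh p e (ineq_list e - range LowIneq :: 'n ineq set)"
    by (rule polyh_antimono) auto
  show "polyh p e (ineq_list e - range LowIneq) \<subseteq> polyh p e (ineq_list e :: 'n ineq set)"
  proof
    fix x :: "real^'n" assume x: "x \<in> polyh p e (ineq_list e - range LowIneq)"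
    show "x \<in> polyh p e (ineq_list e)"
      unfolding polyh_def
    proof (intro CollectI ballI)
      fix j :: "'n ineq" assume j: "j \<in> ineq_list e"
      show "holds p e j x"
      proof (cases "j \<in> range LowIneq")
        case True
        then obtain k where k: "j = LowIneq k" by blast
        have "card (UNIV - {k}) = 1" using d by simp
        then obtain b where "UNIV - {k} = {b}" by (rule card_1_singletonE)
        then have "b \<noteq> k" and UNIV: "(UNIV :: 'n set) = {k, b}" by auto
        then have sum: "(\<Sum>i\<in>UNIV. f i) = f k + f b" for f :: "'n \<Rightarrow> real" unfolding UNIV by simp
        let ?\<alpha> = "concentrated (e - 1) k" and ?q = "real p ^ (e - 1)"
        have pe: "real p ^ e = real p * ?q" using e by (simp flip: power_Suc)
        have "RegIneq 1 ?\<alpha> \<in> ineq_list e - range LowIneq"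
          using concentrated_regular_vector_dim2[OF d e] d e by auto
        then have "real_of_int (reg_bound p e 1 ?\<alpha>) \<le> (\<Sum>i\<in>UNIV. real p ^ ?\<alpha> i * x $ i)"
          using polyhD[OF x] holds_RegIneq by blast
        moreover have "real_of_int (reg_bound p e 1 ?\<alpha>) = real p * ?q + ?q"
          using concentrated_regular_vector_dim2(2)[OF d e] d by (simp add: reg_bound_def pe)
        moreover have "(\<Sum>i\<in>UNIV. real p ^ ?\<alpha> i * x $ i) = ?q * x $ k + x $ b"
          using \<open>b \<noteq> k\<close> by (simp add: sum concentrated_def)
        ultimately have "real p * ?q + ?q \<le> ?q * x $ k + x $ b" by simp
        moreover have "x $ k + x $ b \<le> 1 + real p * ?q" using polyhD[OF x, of SumIneq] d by (auto simp: sum pe)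
        moreover have "?q > 1" using p e by (simp add: one_less_power)
        ultimately have "(?q - 1) * (x $ k - 1) \<ge> 0" by (simp add: algebra_simps)
        then show ?thesis using \<open>?q > 1\<close> k by (simp add: zero_le_mult_iff)
      qed (use polyhD[OF x] j in blast)
    qed
  qed
qed

definition tight_composition :: "nat \<Rightarrow> ('n::finite \<Rightarrow> nat) \<Rightarrow> 'n set \<Rightarrow> 'n \<Rightarrow> nat" where
  "tight_composition e \<alpha> T = (\<lambda>i. (mu e \<alpha> - \<alpha> i) + (if i \<in> T then 1 else 0))"

lemma tight_composition_add:
  fixes \<alpha> :: "'n::finite \<Rightarrow> nat"
  assumes "\<alpha> \<in> regular_vectors lam e" "lam \<in> {1..min e (CARD('n) - 1)}"
  shows "\<alpha> i + tight_composition e \<alpha> T i = mu e \<alpha> + (if i \<in> T then 1 else 0)"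
  using regular_vector_le_mu[OF assms, of i] unfolding tight_composition_def by simp

lemma tight_composition_in_weak_compositions:
  fixes \<alpha> :: "'n::finite \<Rightarrow> nat"
  assumes \<alpha>: "\<alpha> \<in> regular_vectors lam e" "lam \<in> {1..min e (CARD('n) - 1)}" and T: "card T = lam"
  shows "tight_composition e \<alpha> T \<in> weak_compositions e"
proof -
  have "(\<Sum>i\<in>UNIV. \<alpha> i) + (\<Sum>i\<in>UNIV. tight_composition e \<alpha> T i)
      = (\<Sum>i\<in>UNIV. mu e \<alpha> + (if i \<in> T then 1 else 0))"
    by (simp only: tight_composition_add[OF \<alpha>] flip: sum.distrib)
  also have "\<dots> = mu e \<alpha> * CARD('n) + lam"
    using T by (simp add: sum.distrib sum.If_cases)
  finally show ?thesis using regular_vector_sum[OF \<alpha>] unfolding weak_compositions_def by simp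
qed

lemma reg_value_tight_composition:
  fixes \<alpha> :: "'n::finite \<Rightarrow> nat"
  assumes \<alpha>: "\<alpha> \<in> regular_vectors lam e" "lam \<in> {1..min e (CARD('n) - 1)}" and T: "card T = lam"
  shows "reg_value p \<alpha> (tight_composition e \<alpha> T) = reg_bound p e lam \<alpha>"
proof -
  have "reg_value p \<alpha> (tight_composition e \<alpha> T) = (\<Sum>i\<in>UNIV. if i \<in> T then int p ^ (mu e \<alpha> + 1) else int p ^ mu e \<alpha>)"
    unfolding reg_value_def tight_composition_add[OF \<alpha>] by (intro sum.cong) auto
  then show ?thesis unfolding sum_if_mem reg_bound_def T by simp
qed

lemma regular_ineq_determined_by_tight_compositions:
  fixes \<alpha> \<alpha>' :: "'n::finite \<Rightarrow> nat"
  assumes p: "p \<ge> 2" and \<alpha>: "\<alpha> \<in> regular_vectors lam e" "lam \<in> {1..min e (CARD('n) - 1)}"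
    and \<alpha>': "\<alpha>' \<in> regular_vectors lam' e" "lam' \<in> {1..min e (CARD('n) - 1)}"
    and tight: "\<And>T. card T = lam \<Longrightarrow> reg_value p \<alpha>' (tight_composition e \<alpha> T) = reg_bound p e lam' \<alpha>'"
  shows "lam' = lam" and "\<alpha>' = \<alpha>"
proof -
  let ?m = "mu e \<alpha>" and ?m' = "mu e \<alpha>'"
  have near: "\<alpha>' i + tight_composition e \<alpha> T i \<in> {?m', ?m' + 1}" if "card T = lam" for T i
    using reg_bound_le_reg_value(2)[OF p \<alpha>' tight_composition_in_weak_compositions[OF \<alpha> that] tight[OF that]]
    by simp
  text \<open>Compare a tight vertex with \<open>i \<notin> T\<close> to one with \<open>i \<in> T\<close>.\<close>
  have shift: "\<alpha>' i + (?m - \<alpha> i) = ?m'" for i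
  proof -
    have card: "card (UNIV - {i}) = CARD('n) - 1" by simp
    have "lam \<le> card (UNIV - {i})" using \<alpha>(2) card by auto
    then obtain T0 where T0: "T0 \<subseteq> UNIV - {i}" "card T0 = lam" by (rule obtain_subset_with_card_n)
    have "lam - 1 \<le> card (UNIV - {i})" using \<alpha>(2) card by auto
    then obtain S where S: "S \<subseteq> UNIV - {i}" "card S = lam - 1" by (rule obtain_subset_with_card_n)
    have "card (insert i S) = lam" using S \<alpha>(2) by (subst card_insert_disjoint) auto
    moreover have "i \<notin> T0" using T0(1) by auto
    ultimately show ?thesis
      using near[OF T0(2), of i] near[of "insert i S" i] unfolding tight_composition_def by auto
  qed
  obtain i0 i1 where "\<alpha> i0 = 0" "\<alpha>' i1 = 0"
    using regular_vector_has_zero[OF \<alpha>(1)] regular_vector_has_zero[OF \<alpha>'(1)] by metis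
  then have "?m = ?m'" using shift[of i0] shift[of i1] regular_vector_le_mu[OF \<alpha>, of i1] by simp
  then have "\<alpha>' i = \<alpha> i" for i using shift[of i] regular_vector_le_mu[OF \<alpha>, of i] by linarith
  then show "\<alpha>' = \<alpha>" by blast
  then show "lam' = lam" using regular_vector_sum[OF \<alpha>] regular_vector_sum[OF \<alpha>'] by simp
qed

lemma reg_bound_le_card_power:
  fixes \<alpha> :: "'n::finite \<Rightarrow> nat"
  assumes p: "p \<ge> 2" and \<alpha>: "\<alpha> \<in> regular_vectors lam e" "lam \<in> {1..min e (CARD('n) - 1)}"
  shows "real_of_int (reg_bound p e lam \<alpha>) \<le> real CARD('n) * real p ^ (2 * e)"
proof -
  obtain k :: 'n where True by simp
  have "real_of_int (reg_bound p e lam \<alpha>) \<le> real_of_int (reg_value p \<alpha> (concentrated e k))"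
    using reg_bound_le_reg_value(1)[OF p \<alpha> concentrated_in_weak_compositions] by simp
  also have "\<dots> = (\<Sum>i\<in>UNIV. real p ^ \<alpha> i * real p ^ concentrated e k i)"
    by (simp add: reg_value_def power_add)
  also have "\<dots> \<le> (\<Sum>i\<in>(UNIV::'n set). real p ^ e * real p ^ e)"
    using p regular_vector_less[OF \<alpha>(1)] less_imp_le
    by (intro sum_mono mult_mono power_increasing) (auto simp: concentrated_def)
  finally show ?thesis by (simp add: mult_2 power_add)
qed

lemma sum_mult_shrink_toward_ones:
  fixes z :: "real^'n::finite"
  shows "(\<Sum>i\<in>UNIV. a i * ((1 - \<delta>) *\<^sub>R z + \<delta> *\<^sub>R (\<chi> i. 1)) $ i)
    = (1 - \<delta>) * (\<Sum>i\<in>UNIV. a i * z $ i) + \<delta> * (\<Sum>i\<in>UNIV. a i)"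
proof -
  have "a i * ((1 - \<delta>) *\<^sub>R z + \<delta> *\<^sub>R (\<chi> i. 1)) $ i = (1 - \<delta>) * (a i * z $ i) + \<delta> * a i" for i
    by (simp add: algebra_simps)
  then show ?thesis by (simp add: sum.distrib sum_distrib_left)
qed

lemma shrink_toward_ones_in_polyh:
  fixes z :: "real^'n::finite"
  assumes z: "z \<in> polyh p e (ineq_list e)" and d: "CARD('n) \<ge> 1"
    and \<delta>: "0 \<le> \<delta>" "\<delta> \<le> 1" "\<delta> * (real CARD('n) * real p ^ (2 * e) + s) \<le> s" and s: "0 \<le> s"
    and slack: "\<And>lam \<alpha>. RegIneq lam \<alpha> \<in> ineq_list e - {j} \<Longrightarrow>
      real_of_int (reg_bound p e lam \<alpha>) + s \<le> (\<Sum>i\<in>UNIV. real p ^ \<alpha> i * z $ i)"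
    and p: "p \<ge> 2"
  shows "(1 - \<delta>) *\<^sub>R z + \<delta> *\<^sub>R (\<chi> i. 1) \<in> polyh p e (ineq_list e - {j})"
  unfolding polyh_def
proof (intro CollectI ballI)
  let ?y = "(1 - \<delta>) *\<^sub>R z + \<delta> *\<^sub>R (\<chi> i. 1) :: real^'n"
  note lin = sum_mult_shrink_toward_ones[of _ \<delta> z]
  fix j' assume j': "j' \<in> ineq_list e - {j}"
  then have "j' \<in> ineq_list e" by simp
  then show "holds p e j' ?y"
  proof (cases rule: ineq_list_cases)
    case Sum
    have "real CARD('n) \<le> real CARD('n) - 1 + real p ^ e" using p by simp
    then have "(1 - \<delta>) * (\<Sum>i\<in>UNIV. z $ i) + \<delta> * real CARD('n) \<le> real CARD('n) - 1 + real p ^ e"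
      using polyh_sum_le[OF z] \<delta> by (intro convex_bound_le) auto
    then show ?thesis using lin[of "\<lambda>_. 1"] Sum d by (simp add: of_nat_diff)
  next
    case (Low i)
    have "0 \<le> (1 - \<delta>) * (z $ i - 1)" using polyh_ge_one[OF z, of i] \<delta> by simp
    then show ?thesis using Low by (simp add: algebra_simps)
  next
    case (Reg lam \<alpha>)
    let ?R = "real_of_int (reg_bound p e lam \<alpha>)"
    let ?A = "\<Sum>i\<in>UNIV. real p ^ \<alpha> i * z $ i"
    have "?R + s \<le> ?A" using slack j' Reg(1) by blast
    then have "(1 - \<delta>) * (?R + s) \<le> (1 - \<delta>) * ?A" using \<delta> by (intro mult_left_mono) auto
    moreover have "\<delta> * (?R + s) \<le> \<delta> * (real CARD('n) * real p ^ (2 * e) + s)"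
      using reg_bound_le_card_power[OF p Reg(3,2)] \<delta> by (intro mult_left_mono) auto
    moreover have "0 \<le> \<delta> * (\<Sum>i\<in>UNIV. real p ^ \<alpha> i)" using \<delta> by (simp add: sum_nonneg)
    ultimately have "?R \<le> (1 - \<delta>) * ?A + \<delta> * (\<Sum>i\<in>UNIV. real p ^ \<alpha> i)"
      using \<delta> by (simp add: algebra_simps)
    then show ?thesis unfolding Reg(1) holds_RegIneq lin .
  qed
qed

lemma sum_powers_less_reg_bound:
  fixes \<alpha> :: "'n::finite \<Rightarrow> nat"
  assumes p: "p \<ge> 2" and \<alpha>: "\<alpha> \<in> regular_vectors lam e" "lam \<in> {1..min e (CARD('n) - 1)}"
  shows "(\<Sum>i\<in>UNIV. real p ^ \<alpha> i) < real_of_int (reg_bound p e lam \<alpha>)"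
proof -
  have "(\<Sum>i\<in>UNIV. real p ^ \<alpha> i) \<le> (\<Sum>i\<in>(UNIV::'n set). real p ^ mu e \<alpha>)"
    using regular_vector_le_mu[OF \<alpha>] p by (intro sum_mono power_increasing) auto
  also have "\<dots> < real CARD('n) * real p ^ mu e \<alpha> + real lam * (real p - 1) * real p ^ mu e \<alpha>"
    using \<alpha>(2) p by simp
  also have "\<dots> = real_of_int (reg_bound p e lam \<alpha>)"
  proof -
    have "lam \<le> CARD('n)" using \<alpha>(2) by auto
    then show ?thesis by (simp add: reg_bound_def of_nat_diff algebra_simps)
  qed
  finally show ?thesis .
qed

lemma RegIneq_irredundant:
  fixes \<alpha> :: "'n::finite \<Rightarrow> nat"
  assumes p: "p \<ge> 2" and \<alpha>: "\<alpha> \<in> regular_vectors lam e" "lam \<in> {1..min e (CARD('n) - 1)}"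
  shows "polyh p e (ineq_list e) \<subset> polyh p e (ineq_list e - {RegIneq lam \<alpha>})"
proof -
  define E where "E = {T :: 'n set. card T = lam}"
  have "lam \<le> card (UNIV :: 'n set)" using \<alpha>(2) by auto
  then obtain T0 :: "'n set" where "card T0 = lam" by (rule obtain_subset_with_card_n)
  then have E: "finite E" "E \<noteq> {}" unfolding E_def by auto
  have vertices: "tight_composition e \<alpha> ` E \<subseteq> weak_compositions e"
    using tight_composition_in_weak_compositions[OF \<alpha>] unfolding E_def by blast
  define z where "z = centroid p (tight_composition e \<alpha>) E"
  define s where "s = 1 / real (card E)"
  define B where "B = real CARD('n) * real p ^ (2 * e)"
  define \<delta> where "\<delta> = s / (B + s)"
  have "0 < s" "0 \<le> B" using E unfolding s_def B_def by (simp_all add: card_gt_0_iff)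
  then have \<delta>: "0 < \<delta>" "\<delta> \<le> 1" "\<delta> * (B + s) = s" unfolding \<delta>_def by simp_all
  let ?y = "(1 - \<delta>) *\<^sub>R z + \<delta> *\<^sub>R (\<chi> i. 1)"
  show ?thesis
  proof (rule polyh_psubset_remove)
    show "?y \<in> polyh p e (ineq_list e - {RegIneq lam \<alpha>})"
    proof (rule shrink_toward_ones_in_polyh)
      show "z \<in> polyh p e (ineq_list e)" unfolding z_def by (rule centroid_in_polyh[OF p E vertices])
      fix lam' \<alpha>' assume "RegIneq lam' \<alpha>' \<in> ineq_list e - {RegIneq lam \<alpha>}"
      then have \<alpha>': "\<alpha>' \<in> regular_vectors lam' e" "lam' \<in> {1..min e (CARD('n) - 1)}"
        and "lam' \<noteq> lam \<or> \<alpha>' \<noteq> \<alpha>" by auto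
      then obtain T where "T \<in> E" "reg_value p \<alpha>' (tight_composition e \<alpha> T) \<noteq> reg_bound p e lam' \<alpha>'"
        using regular_ineq_determined_by_tight_compositions[OF p \<alpha> \<alpha>'] unfolding E_def by blast
      then show "real_of_int (reg_bound p e lam' \<alpha>') + s \<le> (\<Sum>i\<in>UNIV. real p ^ \<alpha>' i * z $ i)"
        using centroid_reg_slack[OF p E(1) vertices \<alpha>'] unfolding z_def s_def by blast
    qed (use p \<delta> \<open>0 < s\<close> in \<open>auto simp: B_def\<close>)
    have "(\<Sum>i\<in>UNIV. real p ^ \<alpha> i * z $ i) = real_of_int (reg_bound p e lam \<alpha>)"
      using E reg_value_tight_composition[OF \<alpha>] unfolding z_def centroid_reg_value E_def by simp
    then have "(\<Sum>i\<in>UNIV. real p ^ \<alpha> i * ?y $ i)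
        = real_of_int (reg_bound p e lam \<alpha>) - \<delta> * (real_of_int (reg_bound p e lam \<alpha>) - (\<Sum>i\<in>UNIV. real p ^ \<alpha> i))"
      unfolding sum_mult_shrink_toward_ones by (simp add: algebra_simps)
    moreover have "0 < \<delta> * (real_of_int (reg_bound p e lam \<alpha>) - (\<Sum>i\<in>UNIV. real p ^ \<alpha> i))"
      using sum_powers_less_reg_bound[OF p \<alpha>] \<delta>(1) by simp
    ultimately show "\<not> holds p e (RegIneq lam \<alpha>) ?y" unfolding holds_RegIneq by linarith
  qed (use \<alpha> in simp)
qed

lemma reg_not_tight_at_two_concentrated:
  fixes \<alpha> :: "'n::finite \<Rightarrow> nat"
  assumes p: "p \<ge> 2" and e: "e \<ge> 2" and \<alpha>: "\<alpha> \<in> regular_vectors lam e" "lam \<in> {1..min e (CARD('n) - 1)}"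
    and "i \<noteq> j"
  shows "reg_value p \<alpha> (concentrated e i) \<noteq> reg_bound p e lam \<alpha> \<or> reg_value p \<alpha> (concentrated e j) \<noteq> reg_bound p e lam \<alpha>"
proof (rule ccontr)
  assume "\<not> ?thesis"
  then have "\<alpha> i + concentrated e i i \<in> {mu e \<alpha>, mu e \<alpha> + 1}" "\<alpha> i + concentrated e j i \<in> {mu e \<alpha>, mu e \<alpha> + 1}"
    using reg_bound_le_reg_value(2)[OF p \<alpha> concentrated_in_weak_compositions] by auto
  then show False using e \<open>i \<noteq> j\<close> unfolding concentrated_def by auto
qed

lemma lower_coordinate_in_polyh:
  fixes z :: "real^'n::finite"
  assumes p: "p \<ge> 2" and z: "z \<in> polyh p e (ineq_list e)" and \<delta>: "0 \<le> \<delta>" "\<delta> * real p ^ e \<le> s"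
    and slack: "\<And>lam \<alpha>. RegIneq lam \<alpha> \<in> ineq_list e \<Longrightarrow>
      real_of_int (reg_bound p e lam \<alpha>) + s \<le> (\<Sum>i\<in>UNIV. real p ^ \<alpha> i * z $ i)"
  shows "z - \<delta> *\<^sub>R axis k 1 \<in> polyh p e (ineq_list e - {LowIneq k})"
  unfolding polyh_def
proof (intro CollectI ballI)
  let ?y = "z - \<delta> *\<^sub>R axis k 1"
  have lin: "(\<Sum>i\<in>UNIV. a i * ?y $ i) = (\<Sum>i\<in>UNIV. a i * z $ i) - \<delta> * a k" for a
  proof -
    have "a i * ?y $ i = a i * z $ i - (if i = k then \<delta> * a k else 0)" for i
      by (simp add: axis_def algebra_simps)
    then show ?thesis by (simp add: sum_subtractf)
  qed
  fix j assume j: "j \<in> ineq_list e - {LowIneq k}"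
  then have "j \<in> ineq_list e" by simp
  then show "holds p e j ?y"
  proof (cases rule: ineq_list_cases)
    case Sum
    then show ?thesis using polyh_sum_le[OF z] lin[of "\<lambda>_. 1"] \<delta>(1) by (simp add: Suc_leI of_nat_diff)
  next
    case (Low i)
    then show ?thesis using polyh_ge_one[OF z, of i] j by (simp add: axis_def)
  next
    case (Reg lam \<alpha>)
    have "\<delta> * real p ^ \<alpha> k \<le> \<delta> * real p ^ e"
      using p \<delta>(1) regular_vector_less[OF Reg(3), of k] by (intro mult_left_mono power_increasing) auto
    then show ?thesis
      using slack[of lam \<alpha>] Reg \<delta>(2) unfolding Reg(1) holds_RegIneq lin by simp
  qed
qed

lemma LowIneq_irredundant:
  fixes k :: "'n::finite"
  assumes p: "p \<ge> 2" and e: "e \<ge> 2" and d: "CARD('n) \<ge> 3"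
  shows "polyh p e (ineq_list e) \<subset> polyh p e (ineq_list e - {LowIneq k})"
proof -
  define U where "U = UNIV - {k}"
  have U: "finite U" "card U = CARD('n) - 1" unfolding U_def by simp_all
  moreover have "\<not> card U \<le> Suc 0" using U(2) d by simp
  ultimately obtain i j where ij: "i \<in> U" "j \<in> U" "i \<noteq> j" using card_le_Suc0_iff_eq by blast
  have vertices: "concentrated e ` U \<subseteq> weak_compositions e" using concentrated_in_weak_compositions by blast
  define z where "z = centroid p (concentrated e) U"
  define s where "s = 1 / real (card U)"
  define \<delta> where "\<delta> = s / real p ^ e"
  have "z $ k = 1" using ij U d unfolding z_def centroid_def U_def
    by (simp add: sum_component concentrated_def)
  let ?y = "z - \<delta> *\<^sub>R axis k 1"
  show ?thesis
  proof (rule polyh_psubset_remove)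
    show "?y \<in> polyh p e (ineq_list e - {LowIneq k})"
    proof (rule lower_coordinate_in_polyh[OF p])
      show "z \<in> polyh p e (ineq_list e)" unfolding z_def using ij by (intro centroid_in_polyh[OF p U(1) _ vertices]) auto
      fix lam \<alpha> assume "RegIneq lam \<alpha> \<in> (ineq_list e :: 'n ineq set)"
      then have \<alpha>: "\<alpha> \<in> regular_vectors lam e" "lam \<in> {1..min e (CARD('n) - 1)}" by auto
      then obtain t where "t \<in> U" "reg_value p \<alpha> (concentrated e t) \<noteq> reg_bound p e lam \<alpha>"
        using reg_not_tight_at_two_concentrated[OF p e \<alpha> ij(3)] ij by blast
      then show "real_of_int (reg_bound p e lam \<alpha>) + s \<le> (\<Sum>i\<in>UNIV. real p ^ \<alpha> i * z $ i)"
        using centroid_reg_slack[OF p U(1) vertices \<alpha>] unfolding z_def s_def by blast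
    qed (use p in \<open>auto simp: \<delta>_def s_def\<close>)
    have "0 < card U" using ij(1) U(1) card_gt_0_iff by blast
    then have "0 < \<delta>" unfolding \<delta>_def s_def using p by simp
    then show "\<not> holds p e (LowIneq k) ?y" using \<open>z $ k = 1\<close> by (simp add: axis_def)
  qed simp
qed

theorem theorem1p1:
  fixes p e :: nat
  assumes "prime p" and "e \<ge> 2" and "CARD('n::finite) \<ge> 2"
  shows "convex hull (vector_factorisations (p ^ e) :: (real^'n) set)
           = polyh p e (ineq_list e :: 'n ineq set)
       \<and> (CARD('n) \<ge> 3 \<longrightarrow>
            (\<forall>j\<in>(ineq_list e :: 'n ineq set).
               polyh p e (ineq_list e - {j}) \<noteq> polyh p e (ineq_list e)))
       \<and> (CARD('n) = 2 \<longrightarrow>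
            polyh p e ((ineq_list e :: 'n ineq set) - range LowIneq) = polyh p e (ineq_list e)
          \<and> (\<forall>j\<in>(ineq_list e :: 'n ineq set) - range LowIneq.
               polyh p e (ineq_list e - range LowIneq - {j}) \<noteq> polyh p e (ineq_list e)))"
proof -
  have p: "p \<ge> 2" and e: "e \<ge> 1" using assms(1,2) prime_ge_2_nat by auto
  have hull: "convex hull (vector_factorisations (p ^ e) :: (real^'n) set) = polyh p e (ineq_list e)"
    unfolding vector_factorisations_prime_power[OF assms(1)]
    using convex_hull_subset_polyh[OF p] polyh_subset_convex_hull[OF p e assms(3)] by blast
  have irredundant: "polyh p e (ineq_list e) \<subset> polyh p e (ineq_list e - {j})"
    if "j \<in> ineq_list e" "j \<in> range LowIneq \<Longrightarrow> CARD('n) \<ge> 3" for j :: "'n ineq"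
    using that(1)
  proof (cases rule: ineq_list_cases)
    case Sum
    then show ?thesis using SumIneq_irredundant[OF p e assms(3)] by simp
  next
    case (Low i)
    then show ?thesis using LowIneq_irredundant[OF p assms(2)] that(2) by simp
  next
    case (Reg lam \<alpha>)
    then show ?thesis using RegIneq_irredundant[OF p Reg(3,2)] by simp
  qed
  have "polyh p e (ineq_list e - range LowIneq - {j}) \<noteq> polyh p e (ineq_list e)"
    if "j \<in> ineq_list e - range LowIneq" for j :: "'n ineq"
    using irredundant[of j] polyh_antimono[of "ineq_list e - range LowIneq - {j}" "ineq_list e - {j}" p e] that
    by blast
  then show ?thesis
    using hull irredundant LowIneq_redundant_dim2[OF p assms(2)] by blast
qed

end
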